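(* Consider the static single-object erasure-coded Byzantine read/write protocol described in the context over a set $C$ of flexnodes, at most $b<\frac{|C|-k}{3}$ of which are Byzantine, and suppose at most $\delta$ write operations are concurrent with any read. In any execution, if $\rho_1,\rho_2$ are complete read operations such that $\rho_1$ completes before $\rho_2$ is invoked, $\rho_1$ returns a value associated with tag $t_{\rho_1}$ and $\rho_2$ returns a value associated with tag $t_{\rho_2}$, then $t_{\rho_2}\ge t_{\rho_1}$.
   Context: Model. $C$ is a fixed finite set of processes ("flexnodes") over asynchronous reliable channels. Up to $b$ flexnodes may be Byzantine. Processes invoking reads/writes follow the protocol but may crash. Signatures are unforgeable. An $[n,k]$ RLNC code with $n=|C|$: $\mathrm{Encode}(v)$ produces $|C|$ coded elements, any $k$ of which (from the same encoding) recover $v$. Tags are pairs $(z,w)$, $z\in\mathbb{N}$, $w$ a writer identifier, ordered lexicographically. A parameter $\delta\ge1$ is fixed. A quorum is any subset of $C$ of size $\lceil (2|C|+k)/3\rceil$. State. Each flexnode keeps a set $List$ of signed triples $(\langle t,e\rangle,\sigma)$, initially holding the initial pair with tag $t_0$. Primitives (by flexnode $p$): get-tag: query all, each replies with its signed max-tag entry, wait for replies from a quorum, return the maximum verified tag. put-data$(\langle t,v\rangle)$: encode $v$ into $e_1,\dots,e_{|C|}$, send $\langle t,e_j\rangle$ signed by $p$ to the $j$-th flexnode; a receiver adds it to $List$ if the signature verifies and no entry with tag $t$ exists, then if $|List|>\delta+1$ removes the entries with minimum tag, and acknowledges; $p$ waits for a quorum of acknowledgements. get-data: query all, each replies with its $List$,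 wait for a quorum, keep verified pairs, take the maximum tag appearing in at least $k$ received lists, decode and return it with its tag; if none exists the primitive does not complete. Operations: read = get-data returning $\langle t,v\rangle$, then put-data$(\langle t,v\rangle)$, then return $\langle t,v\rangle$; write$(v)$ by $w$ = get-tag returning $t$, then put-data$(\langle (t.z+1,w),v\rangle)$. *)

theory Defs
  imports Complex_Main "HOL-Library.Product_Lexorder"
begin

text \<open>Flexnodes are the indices 0..<n, i.e. C = {..<n} and n = |C|; the j-th flexnode is j.
  Tags are pairs (z,w) ordered lexicographically (Product_Lexorder).\<close>

type_synonym 'w tag = "nat \<times> 'w"
type_synonym 'w opid = "'w \<times> nat"   \<comment> \<open>(client, sequence number of its operation)\<close>
type_synonym ('w,'e) item = "'w tag \<times> 'e"

datatype 'w proc = Node nat | Cli 'w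

datatype ('w,'e) msg =
    QTag "'w opid"
  | RTag "'w opid" "('w,'e) item"
  | Put "'w opid" "'w tag" 'e
  | Ack "'w opid"
  | QData "'w opid"
  | RData "'w opid" "('w,'e) item set"

fun msg_items :: "('w,'e) msg \<Rightarrow> ('w,'e) item set" where
  "msg_items (RTag oi x) = {x}"
| "msg_items (Put oi t e) = {(t,e)}"
| "msg_items (RData oi L) = L"
| "msg_items _ = {}"

datatype ('w,'v,'e) cst =
    Idle
  | Crashed
  | Stuck                                   \<comment> \<open>get-data that does not complete\<close>
  | GT 'v "nat set" "'w tag set"            \<comment> \<open>write, get-tag: value, responders, verified tags\<close>
  | PDw "'w tag" "nat set"                  \<comment> \<open>write, put-data: tag, ackers\<close>
  | GD "nat set" "nat \<Rightarrow> ('w,'e) item set" \<comment> \<open>read, get-data: responders, verified lists\<close>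
  | PDr "'w tag" 'v "nat set"               \<comment> \<open>read, put-data: tag, value, ackers\<close>

record ('w,'v,'e) gstate =
  lst   :: "nat \<Rightarrow> ('w,'e) item set"
  cl    :: "'w \<Rightarrow> ('w,'v,'e) cst"
  cnt   :: "'w \<Rightarrow> nat"                     \<comment> \<open>operations invoked so far by each client\<close>
  net   :: "('w proc \<times> 'w proc \<times> ('w,'e) msg) set"  \<comment> \<open>messages in transit (src, dst, msg)\<close>
  sig   :: "('w,'e) item set"               \<comment> \<open>pairs validly signed (by clients) so far\<close>
  bknow :: "('w,'e) item set"               \<comment> \<open>signed pairs known to the Byzantine flexnodes\<close>

datatype ('w,'v) act =
    WInv 'w nat 'v | WResp 'w nat | RInv 'w nat | RResp 'w nat "'w tag" 'v | Tau

definition quorum_size :: "nat \<Rightarrow> nat \<Rightarrow> nat" where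
  "quorum_size n k = nat \<lceil>(2 * real n + real k) / 3\<rceil>"

definition max_entry :: "('w::linorder,'e) item set \<Rightarrow> ('w,'e) item" where
  "max_entry L = (SOME x. x \<in> L \<and> (\<forall>y\<in>L. fst y \<le> fst x))"

definition trim :: "nat \<Rightarrow> ('w::linorder,'e) item set \<Rightarrow> ('w,'e) item set" where
  "trim \<delta> L = (if card L > \<delta> + 1 then {x \<in> L. fst x \<noteq> Min (fst ` L)} else L)"

definition store :: "nat \<Rightarrow> ('w::linorder,'e) item set \<Rightarrow> ('w,'e) item set \<Rightarrow> 'w tag \<Rightarrow> 'e
    \<Rightarrow> ('w,'e) item set" where
  "store \<delta> sg L t e = (if (t,e) \<in> sg \<and> t \<notin> fst ` L then trim \<delta> (insert (t,e) L) else L)"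

definition candidates :: "nat \<Rightarrow> nat set \<Rightarrow> (nat \<Rightarrow> ('w,'e) item set) \<Rightarrow> 'w tag set" where
  "candidates k R Ls = {t. k \<le> card {j \<in> R. \<exists>e. (t,e) \<in> Ls j}}"

definition mds_code :: "nat \<Rightarrow> nat \<Rightarrow> ('v \<Rightarrow> nat \<Rightarrow> 'e) \<Rightarrow> ('e set \<Rightarrow> 'v) \<Rightarrow> bool" where
  "mds_code n k enc dec \<longleftrightarrow> (\<forall>v J. J \<subseteq> {..<n} \<and> k \<le> card J \<longrightarrow> dec (enc v ` J) = v)"

inductive step :: "nat \<Rightarrow> nat \<Rightarrow> nat \<Rightarrow> nat set \<Rightarrow> ('v \<Rightarrow> nat \<Rightarrow> 'e) \<Rightarrow> ('e set \<Rightarrow> 'v)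
    \<Rightarrow> ('w::linorder,'v,'e) gstate \<Rightarrow> ('w,'v) act \<Rightarrow> ('w,'v,'e) gstate \<Rightarrow> bool"
  for n k \<delta> B enc dec where
  write_inv:
  "\<lbrakk> cl s c = Idle; m = Suc (cnt s c) \<rbrakk> \<Longrightarrow>
   step n k \<delta> B enc dec s (WInv c m v)
     (s\<lparr>cl := (cl s)(c := GT v {} {}), cnt := (cnt s)(c := m),
        net := net s \<union> {(Cli c, Node j, QTag (c,m)) | j. j < n}\<rparr>)"
| read_inv:
  "\<lbrakk> cl s c = Idle; m = Suc (cnt s c) \<rbrakk> \<Longrightarrow>
   step n k \<delta> B enc dec s (RInv c m)
     (s\<lparr>cl := (cl s)(c := GD {} (\<lambda>_. {})), cnt := (cnt s)(c := m),
        net := net s \<union> {(Cli c, Node j, QData (c,m)) | j. j < n}\<rparr>)"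
| node_qtag:
  "\<lbrakk> i < n; i \<notin> B; (src, Node i, QTag oi) \<in> net s \<rbrakk> \<Longrightarrow>
   step n k \<delta> B enc dec s Tau
     (s\<lparr>net := insert (Node i, src, RTag oi (max_entry (lst s i))) (net s - {(src, Node i, QTag oi)})\<rparr>)"
| node_put:
  "\<lbrakk> i < n; i \<notin> B; (src, Node i, Put oi t e) \<in> net s \<rbrakk> \<Longrightarrow>
   step n k \<delta> B enc dec s Tau
     (s\<lparr>lst := (lst s)(i := store \<delta> (sig s) (lst s i) t e),
        net := insert (Node i, src, Ack oi) (net s - {(src, Node i, Put oi t e)})\<rparr>)"
| node_qdata:
  "\<lbrakk> i < n; i \<notin> B; (src, Node i, QData oi) \<in> net s \<rbrakk> \<Longrightarrow>
   step n k \<delta> B enc dec s Tau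
     (s\<lparr>net := insert (Node i, src, RData oi (lst s i)) (net s - {(src, Node i, QData oi)})\<rparr>)"
| cli_rtag_wait:
  "\<lbrakk> cl s c = GT v R T; (Node i, Cli c, RTag (c, cnt s c) x) \<in> net s; i < n; i \<notin> R;
     card (insert i R) < quorum_size n k \<rbrakk> \<Longrightarrow>
   step n k \<delta> B enc dec s Tau
     (s\<lparr>cl := (cl s)(c := GT v (insert i R) (T \<union> (if x \<in> sig s then {fst x} else {}))),
        net := net s - {(Node i, Cli c, RTag (c, cnt s c) x)}\<rparr>)"
| cli_rtag_done:
  "\<lbrakk> cl s c = GT v R T; (Node i, Cli c, RTag (c, cnt s c) x) \<in> net s; i < n; i \<notin> R;
     card (insert i R) = quorum_size n k;
     t = Max (T \<union> (if x \<in> sig s then {fst x} else {})); t' = (Suc (fst t), c) \<rbrakk> \<Longrightarrow>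
   step n k \<delta> B enc dec s Tau
     (s\<lparr>cl := (cl s)(c := PDw t' {}),
        net := (net s - {(Node i, Cli c, RTag (c, cnt s c) x)})
               \<union> {(Cli c, Node j, Put (c, cnt s c) t' (enc v j)) | j. j < n},
        sig := sig s \<union> {(t', enc v j) | j. j < n}\<rparr>)"
| cli_wack_wait:
  "\<lbrakk> cl s c = PDw t A; (Node i, Cli c, Ack (c, cnt s c)) \<in> net s; i < n; i \<notin> A;
     card (insert i A) < quorum_size n k \<rbrakk> \<Longrightarrow>
   step n k \<delta> B enc dec s Tau
     (s\<lparr>cl := (cl s)(c := PDw t (insert i A)),
        net := net s - {(Node i, Cli c, Ack (c, cnt s c))}\<rparr>)"
| cli_wack_done:
  "\<lbrakk> cl s c = PDw t A; (Node i, Cli c, Ack (c, cnt s c)) \<in> net s; i < n; i \<notin> A;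
     card (insert i A) = quorum_size n k \<rbrakk> \<Longrightarrow>
   step n k \<delta> B enc dec s (WResp c (cnt s c))
     (s\<lparr>cl := (cl s)(c := Idle),
        net := net s - {(Node i, Cli c, Ack (c, cnt s c))}\<rparr>)"
| cli_rdata_wait:
  "\<lbrakk> cl s c = GD R Ls; (Node i, Cli c, RData (c, cnt s c) L) \<in> net s; i < n; i \<notin> R;
     card (insert i R) < quorum_size n k \<rbrakk> \<Longrightarrow>
   step n k \<delta> B enc dec s Tau
     (s\<lparr>cl := (cl s)(c := GD (insert i R) (Ls(i := L \<inter> sig s))),
        net := net s - {(Node i, Cli c, RData (c, cnt s c) L)}\<rparr>)"
| cli_rdata_stuck:
  "\<lbrakk> cl s c = GD R Ls; (Node i, Cli c, RData (c, cnt s c) L) \<in> net s; i < n; i \<notin> R;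
     card (insert i R) = quorum_size n k;
     candidates k (insert i R) (Ls(i := L \<inter> sig s)) = {} \<rbrakk> \<Longrightarrow>
   step n k \<delta> B enc dec s Tau
     (s\<lparr>cl := (cl s)(c := Stuck),
        net := net s - {(Node i, Cli c, RData (c, cnt s c) L)}\<rparr>)"
| cli_rdata_done:
  "\<lbrakk> cl s c = GD R Ls; (Node i, Cli c, RData (c, cnt s c) L) \<in> net s; i < n; i \<notin> R;
     card (insert i R) = quorum_size n k;
     Ls' = Ls(i := L \<inter> sig s);
     candidates k (insert i R) Ls' \<noteq> {};
     t = Max (candidates k (insert i R) Ls');
     v = dec {e. \<exists>j \<in> insert i R. (t,e) \<in> Ls' j} \<rbrakk> \<Longrightarrow>
   step n k \<delta> B enc dec s Tau
     (s\<lparr>cl := (cl s)(c := PDr t v {}),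
        net := (net s - {(Node i, Cli c, RData (c, cnt s c) L)})
               \<union> {(Cli c, Node j, Put (c, cnt s c) t (enc v j)) | j. j < n},
        sig := sig s \<union> {(t, enc v j) | j. j < n}\<rparr>)"
| cli_rack_wait:
  "\<lbrakk> cl s c = PDr t v A; (Node i, Cli c, Ack (c, cnt s c)) \<in> net s; i < n; i \<notin> A;
     card (insert i A) < quorum_size n k \<rbrakk> \<Longrightarrow>
   step n k \<delta> B enc dec s Tau
     (s\<lparr>cl := (cl s)(c := PDr t v (insert i A)),
        net := net s - {(Node i, Cli c, Ack (c, cnt s c))}\<rparr>)"
| cli_rack_done:
  "\<lbrakk> cl s c = PDr t v A; (Node i, Cli c, Ack (c, cnt s c)) \<in> net s; i < n; i \<notin> A;
     card (insert i A) = quorum_size n k \<rbrakk> \<Longrightarrow>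
   step n k \<delta> B enc dec s (RResp c (cnt s c) t v)
     (s\<lparr>cl := (cl s)(c := Idle),
        net := net s - {(Node i, Cli c, Ack (c, cnt s c))}\<rparr>)"
| crash:
  "\<lbrakk> cl s c \<noteq> Crashed; N \<subseteq> net s; \<forall>x \<in> net s - N. fst x = Cli c \<rbrakk> \<Longrightarrow>
   step n k \<delta> B enc dec s Tau (s\<lparr>cl := (cl s)(c := Crashed), net := N\<rparr>)"
| byz_send:
  "\<lbrakk> i \<in> B; msg_items m \<subseteq> bknow s \<union> - sig s \<rbrakk> \<Longrightarrow>
   step n k \<delta> B enc dec s Tau (s\<lparr>net := insert (Node i, dst, m) (net s)\<rparr>)"
| byz_recv:
  "\<lbrakk> i \<in> B; (src, Node i, m) \<in> net s \<rbrakk> \<Longrightarrow>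
   step n k \<delta> B enc dec s Tau
     (s\<lparr>net := net s - {(src, Node i, m)}, bknow := bknow s \<union> msg_items m\<rparr>)"

definition init_state :: "nat \<Rightarrow> nat set \<Rightarrow> ('v \<Rightarrow> nat \<Rightarrow> 'e) \<Rightarrow> 'w tag \<Rightarrow> 'v \<Rightarrow> ('w,'v,'e) gstate" where
  "init_state n B enc t0 v0 =
     \<lparr>lst = (\<lambda>j. {(t0, enc v0 j)}), cl = (\<lambda>_. Idle), cnt = (\<lambda>_. 0), net = {},
      sig = {(t0, enc v0 j) | j. j < n}, bknow = {(t0, enc v0 j) | j. j \<in> B}\<rparr>"

definition execution :: "nat \<Rightarrow> nat \<Rightarrow> nat \<Rightarrow> nat set \<Rightarrow> ('v \<Rightarrow> nat \<Rightarrow> 'e) \<Rightarrow> ('e set \<Rightarrow> 'v)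
    \<Rightarrow> ('w::linorder) tag \<Rightarrow> 'v \<Rightarrow> ('w,'v) act list \<Rightarrow> bool" where
  "execution n k \<delta> B enc dec t0 v0 as \<longleftrightarrow>
     (\<exists>ss. length ss = Suc (length as) \<and> ss ! 0 = init_state n B enc t0 v0 \<and>
        (\<forall>i < length as. step n k \<delta> B enc dec (ss ! i) (as ! i) (ss ! Suc i)))"

definition inv_at :: "('w,'v) act list \<Rightarrow> 'w opid \<Rightarrow> nat \<Rightarrow> bool" where
  "inv_at as oi i \<longleftrightarrow> (\<exists>v. as ! i = WInv (fst oi) (snd oi) v) \<or> as ! i = RInv (fst oi) (snd oi)"

definition resp_at :: "('w,'v) act list \<Rightarrow> 'w opid \<Rightarrow> nat \<Rightarrow> bool" where
  "resp_at as oi i \<longleftrightarrow> as ! i = WResp (fst oi) (snd oi) \<or> (\<exists>t v. as ! i = RResp (fst oi) (snd oi) t v)"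

definition precedes :: "('w,'v) act list \<Rightarrow> 'w opid \<Rightarrow> 'w opid \<Rightarrow> bool" where
  "precedes as o1 o2 \<longleftrightarrow> (\<exists>i j. i < j \<and> j < length as \<and> resp_at as o1 i \<and> inv_at as o2 j)"

definition concurrent :: "('w,'v) act list \<Rightarrow> 'w opid \<Rightarrow> 'w opid \<Rightarrow> bool" where
  "concurrent as o1 o2 \<longleftrightarrow> \<not> precedes as o1 o2 \<and> \<not> precedes as o2 o1"

definition write_op :: "('w,'v) act list \<Rightarrow> 'w opid \<Rightarrow> bool" where
  "write_op as oi \<longleftrightarrow> (\<exists>i < length as. \<exists>v. as ! i = WInv (fst oi) (snd oi) v)"

definition read_op :: "('w,'v) act list \<Rightarrow> 'w opid \<Rightarrow> bool" where
  "read_op as oi \<longleftrightarrow> (\<exists>i < length as. as ! i = RInv (fst oi) (snd oi))"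

definition bounded_concurrency :: "nat \<Rightarrow> ('w,'v) act list \<Rightarrow> bool" where
  "bounded_concurrency \<delta> as \<longleftrightarrow>
     (\<forall>r. read_op as r \<longrightarrow> card {w. write_op as w \<and> concurrent as w r} \<le> \<delta>)"

end

theory Submission
  imports Defs
begin

text \<open>
  Say that a flexnode's list covers a tag t if it contains t or at least \<delta> + 1 entries with
  larger tags. Trimming only discards entries of minimal tag, so coverage is never lost, and the
  put-data phase that ends every operation leaves its tag covered by a quorum. Let ts be the
  largest signed tag covered by a quorum when the second read is invoked; the tag t1 returned
  by the first read is one of them, so t1 \<le> ts. Every correct member of that quorum that
  answers the second read still stores ts. Otherwise it stores \<delta> + 1 tags above ts, each
  created by the get-tag of a different write, and each such write is concurrent with the read:
  it was invoked before the read collected its replies, and it cannot have completed before the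
  read was invoked, since its tag would then be quorum-covered and larger than ts. Two quorums
  share more than k correct flexnodes, so ts is a candidate of the second read, and the tag t2
  it returns, the largest candidate, is at least ts.
\<close>

section \<open>Lists, candidates and quorums\<close>

definition covers :: "nat \<Rightarrow> ('w::linorder) tag \<Rightarrow> ('w,'e) item set \<Rightarrow> bool" where
  "covers \<delta> t L \<longleftrightarrow> t \<in> fst ` L \<or> \<delta> + 1 \<le> card {x \<in> L. t < fst x}"

lemma covers_insert:
  assumes "finite L" and "covers \<delta> t L"
  shows "covers \<delta> t (insert x L)"
proof -
  have "card {y \<in> L. t < fst y} \<le> card {y \<in> insert x L. t < fst y}"
    by (rule card_mono) (use assms(1) in auto)
  with assms(2) show ?thesis by (auto simp: covers_def)
qed

lemma covers_trim:
  assumes fin: "finite L" and inj: "inj_on fst L" and cov: "covers \<delta> t L"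
  shows "covers \<delta> t (trim \<delta> L)"
proof (cases "\<delta> + 1 < card L")
  case False
  then show ?thesis using cov by (simp add: trim_def)
next
  case big: True
  define m where "m = Min (fst ` L)"
  have m_le: "m \<le> fst x" if "x \<in> L" for x using fin that by (simp add: m_def)
  from big have "L \<noteq> {}" by auto
  then have "m \<in> fst ` L" using fin by (simp add: m_def)
  then obtain y where y: "y \<in> L" "fst y = m" by blast
  have trim: "trim \<delta> L = L - {y}"
    using big y inj by (auto simp: trim_def m_def[symmetric] dest: inj_onD)
  have card_trim: "\<delta> + 1 \<le> card (L - {y})" using big y fin by simp
  show ?thesis
  proof (cases "t < m")
    case True
    then have "{x \<in> trim \<delta> L. t < fst x} = L - {y}" using m_le trim by (auto intro: less_le_trans)
    then show ?thesis using card_trim by (simp add: covers_def)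
  next
    case False
    then have same: "{x \<in> trim \<delta> L. t < fst x} = {x \<in> L. t < fst x}" using y trim by auto
    show ?thesis
    proof (cases "t = m")
      case True
      have "{x \<in> L. t < fst x} = L - {y}"
        using True m_le y inj by (auto simp: order_le_less dest: inj_onD)
      then show ?thesis using same card_trim by (simp add: covers_def)
    next
      case False
      then have "t \<in> fst ` L \<Longrightarrow> t \<in> fst ` trim \<delta> L" using trim y by auto
      with cov same show ?thesis by (auto simp: covers_def)
    qed
  qed
qed

lemma covers_store:
  assumes fin: "finite L" and inj: "inj_on fst L" and cov: "covers \<delta> t L \<or> (t' = t \<and> (t, e) \<in> sg)"
  shows "covers \<delta> t (store \<delta> sg L t' e)"
proof (cases "(t', e) \<in> sg \<and> t' \<notin> fst ` L")
  case True
  have "covers \<delta> t (insert (t', e) L)"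
  proof (cases "t' = t")
    case False
    then show ?thesis using cov covers_insert[OF fin] by blast
  qed (simp add: covers_def)
  moreover have "inj_on fst (insert (t', e) L)" using True inj by auto
  ultimately show ?thesis using True fin by (simp add: store_def covers_trim)
next
  case False
  then show ?thesis using cov by (auto simp: store_def covers_def)
qed

lemma store_subset: "store \<delta> sg L t e \<subseteq> L \<union> ({(t, e)} \<inter> sg)"
  by (auto simp: store_def trim_def)

lemma finite_store: "finite L \<Longrightarrow> finite (store \<delta> sg L t e)"
  using store_subset by (rule finite_subset) simp

lemma inj_on_fst_store:
  assumes "inj_on fst L"
  shows "inj_on fst (store \<delta> sg L t e)"
proof (cases "(t, e) \<in> sg \<and> t \<notin> fst ` L")
  case True
  then have "inj_on fst (insert (t, e) L)" using assms by auto
  moreover have "store \<delta> sg L t e \<subseteq> insert (t, e) L" by (auto simp: store_def trim_def)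
  ultimately show ?thesis by (rule inj_on_subset)
qed (use assms in \<open>auto simp: store_def\<close>)

lemma candidates_subset: "1 \<le> k \<Longrightarrow> (\<And>j. Ls j \<subseteq> S) \<Longrightarrow> candidates k R Ls \<subseteq> fst ` S"
proof
  fix t assume "1 \<le> k" "\<And>j. Ls j \<subseteq> S" "t \<in> candidates k R Ls"
  then have "0 < card {j \<in> R. \<exists>e. (t, e) \<in> Ls j}" by (simp add: candidates_def)
  then have "{j \<in> R. \<exists>e. (t, e) \<in> Ls j} \<noteq> {}" by (simp add: card_gt_0_iff)
  then show "t \<in> fst ` S" using \<open>\<And>j. Ls j \<subseteq> S\<close> by force
qed

lemma quorum_size_le: "k \<le> n \<Longrightarrow> quorum_size n k \<le> n"
  by (simp add: quorum_size_def ceiling_le_iff)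

lemma quorum_size_ge: "2 * real n + real k \<le> 3 * real (quorum_size n k)"
proof -
  define x where "x = (2 * real n + real k) / 3"
  have "2 * real n + real k = 3 * x" by (simp add: x_def)
  also have "\<dots> \<le> 3 * of_int \<lceil>x\<rceil>" by simp
  also have "\<dots> = 3 * real (quorum_size n k)" by (simp add: quorum_size_def x_def)
  finally show ?thesis .
qed

lemma quorum_intersection:
  assumes R: "R \<subseteq> {..<n}" and A: "A \<subseteq> {..<n}"
    and cR: "quorum_size n k \<le> card R" and cA: "quorum_size n k \<le> card A"
    and fB: "finite B" and cB: "3 * real (card B) < real n - real k"
  shows "k < card (R \<inter> A - B)"
proof -
  have fR: "finite R" and fA: "finite A" using R A finite_subset by auto
  have "card (R \<union> A) \<le> n" using R A by (metis card_lessThan card_mono finite_lessThan le_sup_iff)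
  then have "card R + card A \<le> n + card (R \<inter> A)" using card_Un_Int[OF fR fA] by linarith
  then have "real (card R) + real (card A) \<le> real n + real (card (R \<inter> A))" by linarith
  moreover have "real (quorum_size n k) \<le> real (card R)" "real (quorum_size n k) \<le> real (card A)"
    using cR cA by simp_all
  ultimately have "real k < real (card (R \<inter> A)) - real (card B)"
    using quorum_size_ge[of n k] cB by linarith
  then have "k < card (R \<inter> A) - card B" by linarith
  also have "\<dots> \<le> card (R \<inter> A - B)" using diff_card_le_card_Diff[OF fB] .
  finally show ?thesis .
qed

lemma finite_write_ops: "finite {w. write_op as w}"
proof -
  have "{w. write_op as w} \<subseteq> (\<lambda>i. case as ! i of WInv c m v \<Rightarrow> (c, m)) ` {..<length as}"
    by (force simp: write_op_def)
  then show ?thesis by (rule finite_subset) simp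
qed

section \<open>An invariant of the protocol\<close>

text \<open>
  A Put or Ack of a client's current operation cannot exist while that operation is still
  querying (GT, GD); once it has finished (Idle, Stuck, Crashed) nothing is required.
\<close>

fun put_tag_ok :: "('w,'v,'e) cst \<Rightarrow> 'w tag \<Rightarrow> bool" where
  "put_tag_ok (PDw t' A) t \<longleftrightarrow> t = t'"
| "put_tag_ok (PDr t' v A) t \<longleftrightarrow> t = t'"
| "put_tag_ok (GT v R T) t \<longleftrightarrow> False"
| "put_tag_ok (GD R Ls) t \<longleftrightarrow> False"
| "put_tag_ok _ t \<longleftrightarrow> True"

fun ack_ok :: "nat \<Rightarrow> ('w::linorder,'v,'e) cst \<Rightarrow> ('w,'e) item set \<Rightarrow> bool" where
  "ack_ok \<delta> (PDw t A) L \<longleftrightarrow> covers \<delta> t L"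
| "ack_ok \<delta> (PDr t v A) L \<longleftrightarrow> covers \<delta> t L"
| "ack_ok \<delta> (GT v R T) L \<longleftrightarrow> False"
| "ack_ok \<delta> (GD R Ls) L \<longleftrightarrow> False"
| "ack_ok \<delta> _ L \<longleftrightarrow> True"

definition covered_by ::
    "nat \<Rightarrow> nat \<Rightarrow> nat set \<Rightarrow> nat set \<Rightarrow> ('w::linorder) tag \<Rightarrow> ('w,'v,'e) gstate \<Rightarrow> bool" where
  "covered_by n \<delta> B A t s \<longleftrightarrow> A \<subseteq> {..<n} \<and> (\<forall>a \<in> A - B. covers \<delta> t (lst s a))"

lemma covered_by_empty [simp]: "covered_by n \<delta> B {} t s"
  by (simp add: covered_by_def)

definition quorum_covered ::
    "nat \<Rightarrow> nat \<Rightarrow> nat \<Rightarrow> nat set \<Rightarrow> ('w::linorder) tag \<Rightarrow> ('w,'v,'e) gstate \<Rightarrow> bool" where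
  "quorum_covered n k \<delta> B t s \<longleftrightarrow> (\<exists>A. quorum_size n k \<le> card A \<and> covered_by n \<delta> B A t s)"

definition lists_wf :: "nat \<Rightarrow> ('w::linorder,'v,'e) gstate \<Rightarrow> bool" where
  "lists_wf n s \<longleftrightarrow>
     finite (sig s) \<and> (\<forall>a. finite (lst s a) \<and> inj_on fst (lst s a)) \<and> (\<forall>a<n. lst s a \<subseteq> sig s)"

definition puts_wf :: "('w::linorder,'v,'e) gstate \<Rightarrow> bool" where
  "puts_wf s \<longleftrightarrow> (\<forall>c dst oi t e. (Cli c, dst, Put oi t e) \<in> net s \<longrightarrow>
     (t, e) \<in> sig s \<and> fst oi = c \<and> snd oi \<le> cnt s c \<and> (snd oi = cnt s c \<longrightarrow> put_tag_ok (cl s c) t))"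

definition acks_wf :: "nat \<Rightarrow> nat \<Rightarrow> nat set \<Rightarrow> ('w::linorder,'v,'e) gstate \<Rightarrow> bool" where
  "acks_wf n \<delta> B s \<longleftrightarrow> (\<forall>a c oi. (Node a, Cli c, Ack oi) \<in> net s \<longrightarrow> a < n \<longrightarrow> a \<notin> B \<longrightarrow>
     fst oi = c \<and> snd oi \<le> cnt s c \<and> (snd oi = cnt s c \<longrightarrow> ack_ok \<delta> (cl s c) (lst s a)))"

definition queries_wf :: "('w::linorder,'v,'e) gstate \<Rightarrow> bool" where
  "queries_wf s \<longleftrightarrow> (\<forall>c dst oi. (Cli c, dst, QData oi) \<in> net s \<longrightarrow> fst oi = c \<and> snd oi \<le> cnt s c)"

fun phase_ok :: "nat \<Rightarrow> nat \<Rightarrow> nat set \<Rightarrow> ('v \<Rightarrow> nat \<Rightarrow> 'e) \<Rightarrow> ('w::linorder,'v,'e) gstate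
    \<Rightarrow> ('w,'v,'e) cst \<Rightarrow> bool" where
  "phase_ok n \<delta> B enc s (PDw t A) \<longleftrightarrow> covered_by n \<delta> B A t s"
| "phase_ok n \<delta> B enc s (PDr t v A) \<longleftrightarrow> covered_by n \<delta> B A t s \<and> (\<forall>j<n. (t, enc v j) \<in> sig s)"
| "phase_ok n \<delta> B enc s (GD R Ls) \<longleftrightarrow> R \<subseteq> {..<n} \<and> (\<forall>a. Ls a \<subseteq> sig s)"
| "phase_ok n \<delta> B enc s _ \<longleftrightarrow> True"

definition phases_wf ::
    "nat \<Rightarrow> nat \<Rightarrow> nat set \<Rightarrow> ('v \<Rightarrow> nat \<Rightarrow> 'e) \<Rightarrow> ('w::linorder,'v,'e) gstate \<Rightarrow> bool" where
  "phases_wf n \<delta> B enc s \<longleftrightarrow> (\<forall>c. phase_ok n \<delta> B enc s (cl s c))"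

definition invariant ::
    "nat \<Rightarrow> nat \<Rightarrow> nat set \<Rightarrow> ('v \<Rightarrow> nat \<Rightarrow> 'e) \<Rightarrow> ('w::linorder,'v,'e) gstate \<Rightarrow> bool" where
  "invariant n \<delta> B enc s \<longleftrightarrow>
     lists_wf n s \<and> puts_wf s \<and> acks_wf n \<delta> B s \<and> queries_wf s \<and> phases_wf n \<delta> B enc s"

lemma invariant_init: "invariant n \<delta> B enc (init_state n B enc t0 v0)"
  by (auto simp: invariant_def lists_wf_def puts_wf_def acks_wf_def queries_wf_def phases_wf_def
      init_state_def)

lemma sig_step_mono: "step n k \<delta> B enc dec s a s' \<Longrightarrow> sig s \<subseteq> sig s'"
  by (cases rule: step.cases) auto

lemma cnt_step_mono: "step n k \<delta> B enc dec s a s' \<Longrightarrow> cnt s c \<le> cnt s' c"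
  by (cases rule: step.cases) auto

lemma covers_step:
  assumes "lists_wf n s" and "step n k \<delta> B enc dec s a s'" and "covers \<delta> t (lst s x)"
  shows "covers \<delta> t (lst s' x)"
  using assms(2)
proof cases
  case (node_put i src oi t' e)
  have "finite (lst s i)" "inj_on fst (lst s i)" using assms(1) by (auto simp: lists_wf_def)
  then show ?thesis using node_put assms(3) covers_store[of "lst s i" \<delta> t t' e "sig s"] by auto
qed (use assms(3) in auto)

lemma covered_by_step:
  "lists_wf n s \<Longrightarrow> step n k \<delta> B enc dec s a s' \<Longrightarrow> covered_by n \<delta> B A t s \<Longrightarrow> covered_by n \<delta> B A t s'"
  unfolding covered_by_def using covers_step by blast

lemma quorum_covered_step:
  "lists_wf n s \<Longrightarrow> step n k \<delta> B enc dec s a s' \<Longrightarrow> quorum_covered n k \<delta> B t s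
    \<Longrightarrow> quorum_covered n k \<delta> B t s'"
  unfolding quorum_covered_def using covered_by_step by blast

lemma ack_ok_step:
  assumes "lists_wf n s" and st: "step n k \<delta> B enc dec s a s'"
    and "cnt s' c = cnt s c" and "ack_ok \<delta> (cl s c) (lst s x)"
  shows "ack_ok \<delta> (cl s' c) (lst s' x)"
proof -
  have "ack_ok \<delta> st (lst s' x)" if "ack_ok \<delta> st (lst s x)" for st
    using that covers_step[OF assms(1) st] by (cases st) auto
  with st show ?thesis using assms(3,4) by cases (auto split: if_splits)
qed

lemma new_ack_step:
  assumes "step n k \<delta> B enc dec s a s'"
    and "(Node i, dst, Ack oi) \<in> net s'" and "(Node i, dst, Ack oi) \<notin> net s" and "i \<notin> B"
  shows "\<exists>t e. (dst, Node i, Put oi t e) \<in> net s \<and> lst s' i = store \<delta> (sig s) (lst s i) t e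
    \<and> cl s' = cl s \<and> cnt s' = cnt s"
  using assms by cases auto

lemma lists_wf_step:
  assumes "invariant n \<delta> B enc s" and "step n k \<delta> B enc dec s a s'"
  shows "lists_wf n s'"
  using assms(2)
proof cases
  case (node_put i src oi t e)
  then show ?thesis using assms(1) store_subset[of \<delta> "sig s" "lst s i" t e]
    by (auto simp: invariant_def lists_wf_def finite_store inj_on_fst_store)
qed (use assms(1) in \<open>auto simp: invariant_def lists_wf_def\<close>)

lemma puts_wf_step:
  assumes "invariant n \<delta> B enc s" and "step n k \<delta> B enc dec s a s'"
  shows "puts_wf s'"
  using assms(2) assms(1)[unfolded invariant_def]
  by cases (auto simp: puts_wf_def; fastforce)+

lemma queries_wf_step:
  assumes "invariant n \<delta> B enc s" and "step n k \<delta> B enc dec s a s'"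
  shows "queries_wf s'"
  using assms(2) assms(1)[unfolded invariant_def]
  by cases (auto simp: queries_wf_def; fastforce)+

lemma acks_wf_step:
  assumes I: "invariant n \<delta> B enc s" and st: "step n k \<delta> B enc dec s a s'"
  shows "acks_wf n \<delta> B s'"
  unfolding acks_wf_def
proof (intro allI impI)
  fix x c oi
  assume ack: "(Node x, Cli c, Ack oi) \<in> net s'" and x: "x < n" "x \<notin> B"
  have L: "lists_wf n s" using I by (simp add: invariant_def)
  show "fst oi = c \<and> snd oi \<le> cnt s' c \<and> (snd oi = cnt s' c \<longrightarrow> ack_ok \<delta> (cl s' c) (lst s' x))"
  proof (cases "(Node x, Cli c, Ack oi) \<in> net s")
    case True
    with I x have "fst oi = c \<and> snd oi \<le> cnt s c \<and> (snd oi = cnt s c \<longrightarrow> ack_ok \<delta> (cl s c) (lst s x))"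
      unfolding invariant_def acks_wf_def by blast
    then show ?thesis using cnt_step_mono[OF st, of c] ack_ok_step[OF L st] by fastforce
  next
    case False
    then obtain t e where put: "(Cli c, Node x, Put oi t e) \<in> net s"
      and lst': "lst s' x = store \<delta> (sig s) (lst s x) t e" and "cl s' = cl s" "cnt s' = cnt s"
      using new_ack_step[OF st ack _ x(2)] by blast
    moreover have "(t, e) \<in> sig s" "fst oi = c" "snd oi \<le> cnt s c"
      "snd oi = cnt s c \<longrightarrow> put_tag_ok (cl s c) t"
      using I put unfolding invariant_def puts_wf_def by blast+
    moreover have "covers \<delta> t (lst s' x)"
      using lst' covers_store[of "lst s x" \<delta> t t e "sig s"] L \<open>(t, e) \<in> sig s\<close>
      by (simp add: lists_wf_def)
    ultimately show ?thesis by (cases "cl s c") auto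
  qed
qed

lemma phases_wf_step:
  assumes I: "invariant n \<delta> B enc s" and st: "step n k \<delta> B enc dec s a s'"
  shows "phases_wf n \<delta> B enc s'"
proof -
  have L: "lists_wf n s" and P: "phase_ok n \<delta> B enc s (cl s c)" and K: "acks_wf n \<delta> B s" for c
    using I by (auto simp: invariant_def phases_wf_def)
  have mono: "phase_ok n \<delta> B enc s' st" if "phase_ok n \<delta> B enc s st" for st
    using that covered_by_step[OF L st] sig_step_mono[OF st] by (cases st) fastforce+
  have acked: "covered_by n \<delta> B (insert i A) t s"
    if "covered_by n \<delta> B A t s" "ack_ok \<delta> (cl s c) (lst s i) = covers \<delta> t (lst s i)"
      "(Node i, Cli c, Ack (c, cnt s c)) \<in> net s" "i < n" for i c t A
    using that K by (auto simp: covered_by_def acks_wf_def)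
  have upd: "phases_wf n \<delta> B enc s'"
    if "cl s' = (cl s)(c := st)" "phase_ok n \<delta> B enc s' st" for c st
    using that P mono by (simp add: phases_wf_def)
  from st show ?thesis
  proof cases
    case (cli_wack_wait c t A i)
    then show ?thesis using P[of c] acked[of A t c i] mono[of "PDw t (insert i A)"]
      by (intro upd[of c]) auto
  next
    case (cli_rack_wait c t v A i)
    then show ?thesis using P[of c] acked[of A t c i] mono[of "PDr t v (insert i A)"]
      by (intro upd[of c]) auto
  next
    case (cli_rdata_wait c R Ls i L)
    then show ?thesis using P[of c] by (intro upd[of c]) auto
  next
    case (cli_rdata_done c R Ls i L Ls' t v)
    then show ?thesis by (intro upd[of c]) auto
  qed (use P mono in \<open>auto simp: phases_wf_def\<close>)
qed

lemma invariant_step: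
  assumes "invariant n \<delta> B enc s" and "step n k \<delta> B enc dec s a s'"
  shows "invariant n \<delta> B enc s'"
  using lists_wf_step[OF assms] puts_wf_step[OF assms] acks_wf_step[OF assms]
    queries_wf_step[OF assms] phases_wf_step[OF assms]
  by (simp add: invariant_def)

lemma new_tag_step:
  assumes I: "invariant n \<delta> B enc s" and st: "step n k \<delta> B enc dec s a s'" and k: "1 \<le> k"
    and new: "t \<notin> fst ` sig s" "t \<in> fst ` sig s'"
  shows "\<exists>c v R T. cl s c = GT v R T \<and> cl s' c = PDw t {}"
  using st
proof cases
  case (cli_rtag_done c v R T i x t1 t')
  then have "t = t'" using new by auto
  then show ?thesis using cli_rtag_done by auto
next
  case (cli_rdata_done c R Ls i L Ls' t' v)
  have "phase_ok n \<delta> B enc s (cl s c)" using I by (simp add: invariant_def phases_wf_def)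
  then have "Ls' j \<subseteq> sig s" for j using cli_rdata_done(3,8) by auto
  then have sub: "candidates k (insert i R) Ls' \<subseteq> fst ` sig s" by (rule candidates_subset[OF k])
  moreover have "finite (sig s)" using I by (simp add: invariant_def lists_wf_def)
  ultimately have "finite (candidates k (insert i R) Ls')" by (meson finite_imageI finite_subset)
  then have "t' \<in> fst ` sig s" using cli_rdata_done(9,10) Max_in sub by blast
  moreover have "fst ` sig s' \<subseteq> insert t' (fst ` sig s)" using cli_rdata_done(2) by auto
  ultimately show ?thesis using new by auto
qed (use new in auto)

lemma GT_step:
  assumes "step n k \<delta> B enc dec s a s'" and "cl s' c = GT v R T"
  shows "a = WInv c (cnt s' c) v \<or> (\<exists>R0 T0. cl s c = GT v R0 T0 \<and> cnt s' c = cnt s c)"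
  using assms by cases (auto split: if_splits)

lemma GT_PDw_step:
  "step n k \<delta> B enc dec s a s' \<Longrightarrow> cl s c = GT v R T \<Longrightarrow> cl s' c = PDw t A \<Longrightarrow> cnt s' c = cnt s c"
  by (cases rule: step.cases) (auto split: if_splits)

lemma WResp_step:
  "step n k \<delta> B enc dec s (WResp c m) s' \<Longrightarrow> \<exists>t A i. cl s c = PDw t A \<and> cnt s c = m
     \<and> (Node i, Cli c, Ack (c, m)) \<in> net s \<and> i < n \<and> card (insert i A) = quorum_size n k"
  by (cases rule: step.cases) auto

lemma RResp_step:
  "step n k \<delta> B enc dec s (RResp c m t v) s' \<Longrightarrow> \<exists>A i. cl s c = PDr t v A \<and> cnt s c = m
     \<and> (Node i, Cli c, Ack (c, m)) \<in> net s \<and> i < n \<and> card (insert i A) = quorum_size n k"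
  by (cases rule: step.cases) auto

lemma WInv_step: "step n k \<delta> B enc dec s (WInv c m v) s' \<Longrightarrow> cnt s c < m \<and> cnt s' c = m"
  by (cases rule: step.cases) auto

lemma RInv_step:
  "step n k \<delta> B enc dec s (RInv c m) s' \<Longrightarrow> cnt s c < m \<and> cnt s' c = m \<and> cl s' c = GD {} (\<lambda>_. {})"
  by (cases rule: step.cases) auto

lemma invariant_ack_ok:
  assumes "invariant n \<delta> B enc s" and "(Node i, Cli c, Ack (c, cnt s c)) \<in> net s"
    and "i < n" "i \<notin> B"
  shows "ack_ok \<delta> (cl s c) (lst s i)"
  using assms unfolding invariant_def acks_wf_def by force

lemma quorum_covered_ack:
  assumes I: "invariant n \<delta> B enc s"
    and st: "cl s c = PDw t A \<or> cl s c = PDr t v A"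
    and ack: "(Node i, Cli c, Ack (c, cnt s c)) \<in> net s" "i < n"
      "card (insert i A) = quorum_size n k"
  shows "quorum_covered n k \<delta> B t s"
proof -
  have "phase_ok n \<delta> B enc s (cl s c)" using I by (simp add: invariant_def phases_wf_def)
  then have "covered_by n \<delta> B A t s" using st by auto
  moreover have "i \<notin> B \<Longrightarrow> covers \<delta> t (lst s i)"
    using invariant_ack_ok[OF I ack(1,2)] st by auto
  ultimately have "covered_by n \<delta> B (insert i A) t s" using ack by (auto simp: covered_by_def)
  then show ?thesis unfolding quorum_covered_def using ack(3) by (intro exI[of _ "insert i A"]) simp
qed

lemma RData_step:
  assumes I: "invariant n \<delta> B enc s" and st: "step n k \<delta> B enc dec s a s'"
    and msg: "(Node i, Cli c, RData (c, m) L) \<in> net s'" and "i \<notin> B"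
  shows "(Node i, Cli c, RData (c, m) L) \<in> net s \<or> (L = lst s i \<and> m \<le> cnt s c)"
  using st
proof cases
  case (node_qdata i' src oi)
  then show ?thesis using I msg by (auto simp: invariant_def queries_wf_def)
qed (use msg assms(4) in auto)

lemma GD_step:
  assumes st: "step n k \<delta> B enc dec s a s'" and gd: "cl s' c = GD R' Ls'" and "x \<in> R'"
  shows "(\<exists>R Ls. cl s c = GD R Ls \<and> x \<in> R \<and> Ls' x = Ls x \<and> cnt s' c = cnt s c) \<or>
    (\<exists>L. (Node x, Cli c, RData (c, cnt s c) L) \<in> net s \<and> Ls' x = L \<inter> sig s \<and> cnt s' c = cnt s c)"
  using st gd assms(3) by cases (auto split: if_splits)

section \<open>Progress of a client\<close>

text \<open>
  Operation m of a client runs through progress 5m + 1 (get-tag or get-data), 5m + 2 (put-data)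
  and 5m + 3 (completed or stuck); a crash, 5m + 4, is final.
\<close>

fun phase :: "('w,'v,'e) cst \<Rightarrow> nat" where
  "phase (GT v R T) = 1" | "phase (GD R Ls) = 1" | "phase (PDw t A) = 2" | "phase (PDr t v A) = 2"
| "phase Idle = 3" | "phase Stuck = 3" | "phase Crashed = 4"

definition progress :: "('w,'v,'e) gstate \<Rightarrow> 'w \<Rightarrow> nat" where
  "progress s c = 5 * cnt s c + phase (cl s c)"

lemma phase_le: "phase st \<le> 4"
  by (cases st) auto

lemma progress_decode: "progress s c = 5 * m + p \<Longrightarrow> p < 5 \<Longrightarrow> cnt s c = m \<and> phase (cl s c) = p"
  using phase_le[of "cl s c"] unfolding progress_def by presburger

lemma progress_step_mono:
  assumes "step n k \<delta> B enc dec s a s'"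
  shows "progress s c \<le> progress s' c"
proof -
  have "phase st \<le> 3" if "st \<noteq> Crashed" for st :: "('w,'v,'e) cst" using that by (cases st) auto
  with assms show ?thesis by cases (auto simp: progress_def phase_le)
qed

lemma progress_stable_step:
  assumes "step n k \<delta> B enc dec s a s'" and "progress s' c = progress s c"
  shows "cl s c = GD R Ls \<Longrightarrow> \<exists>R' Ls'. cl s' c = GD R' Ls'"
    and "cl s c = PDw t A \<Longrightarrow> \<exists>A'. cl s' c = PDw t A'"
    and "cl s c = PDr t v A \<Longrightarrow> \<exists>v' A'. cl s' c = PDr t v' A'"
  using assms by (cases rule: step.cases; auto simp: progress_def split: if_splits)+

lemma GD_exit_step:
  assumes "step n k \<delta> B enc dec s a s'" and "cl s c = GD R Ls" and "phase (cl s' c) = 2"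
  shows "\<exists>i L v A. (Node i, Cli c, RData (c, cnt s c) L) \<in> net s \<and> i < n \<and> i \<notin> R
    \<and> card (insert i R) = quorum_size n k \<and> cnt s' c = cnt s c
    \<and> cl s' c = PDr (Max (candidates k (insert i R) (Ls(i := L \<inter> sig s)))) v A"
  using assms by cases (auto split: if_splits)

locale run =
  fixes n k \<delta> :: nat and B :: "nat set" and enc :: "'v \<Rightarrow> nat \<Rightarrow> 'e" and dec :: "'e set \<Rightarrow> 'v"
    and t0 :: "('w::linorder) tag" and v0 :: 'v and as :: "('w,'v) act list"
    and ss :: "('w,'v,'e) gstate list"
  assumes ss_0: "ss ! 0 = init_state n B enc t0 v0"
    and step_at: "\<And>x. x < length as \<Longrightarrow> step n k \<delta> B enc dec (ss ! x) (as ! x) (ss ! Suc x)"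
begin

abbreviation "N \<equiv> length as"

lemma stable_at:
  assumes "\<And>z. z < N \<Longrightarrow> P (ss ! z) \<Longrightarrow> P (ss ! Suc z)" and "P (ss ! x)" and "x \<le> y" and "y \<le> N"
  shows "P (ss ! y)"
  using assms(3,4) by (induction y rule: dec_induct) (use assms(1,2) in auto)

lemma monotone_at:
  fixes f :: "('w,'v,'e) gstate \<Rightarrow> 'a::order"
  assumes "\<And>z. z < N \<Longrightarrow> f (ss ! z) \<le> f (ss ! Suc z)" and "x \<le> y" and "y \<le> N"
  shows "f (ss ! x) \<le> f (ss ! y)"
  using assms(2,3)
proof (induction y rule: dec_induct)
  case (step m)
  then show ?case using assms(1)[of m] by (auto intro: order_trans)
qed simp

lemma invariant_at: "x \<le> N \<Longrightarrow> invariant n \<delta> B enc (ss ! x)"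
  by (rule stable_at[where x = 0]) (auto simp: ss_0 invariant_init intro: invariant_step step_at)

lemma lists_wf_at: "x \<le> N \<Longrightarrow> lists_wf n (ss ! x)"
  using invariant_at by (simp add: invariant_def)

lemma progress_mono_at: "x \<le> y \<Longrightarrow> y \<le> N \<Longrightarrow> progress (ss ! x) c \<le> progress (ss ! y) c"
  using monotone_at[of "\<lambda>s. progress s c"] progress_step_mono step_at by blast

lemma cnt_mono_at: "x \<le> y \<Longrightarrow> y \<le> N \<Longrightarrow> cnt (ss ! x) c \<le> cnt (ss ! y) c"
  using monotone_at[of "\<lambda>s. cnt s c"] cnt_step_mono step_at by blast

lemma sig_mono_at: "x \<le> y \<Longrightarrow> y \<le> N \<Longrightarrow> sig (ss ! x) \<subseteq> sig (ss ! y)"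
  using monotone_at[of sig] sig_step_mono step_at by blast

lemma covers_mono_at:
  "covers \<delta> t (lst (ss ! x) a) \<Longrightarrow> x \<le> y \<Longrightarrow> y \<le> N \<Longrightarrow> covers \<delta> t (lst (ss ! y) a)"
  by (rule stable_at[where P = "\<lambda>s. covers \<delta> t (lst s a)"])
    (auto intro: covers_step[OF lists_wf_at step_at])

lemma quorum_covered_mono_at:
  "quorum_covered n k \<delta> B t (ss ! x) \<Longrightarrow> x \<le> y \<Longrightarrow> y \<le> N \<Longrightarrow> quorum_covered n k \<delta> B t (ss ! y)"
  by (rule stable_at[where P = "quorum_covered n k \<delta> B t"])
    (auto intro: quorum_covered_step[OF lists_wf_at step_at])

lemma progress_stable_at:
  assumes closed: "\<And>s a s'. step n k \<delta> B enc dec s a s' \<Longrightarrow> progress s' c = progress s c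
      \<Longrightarrow> P (cl s c) \<Longrightarrow> P (cl s' c)"
    and "P (cl (ss ! x) c)" and "x \<le> y" and "y \<le> N" and "progress (ss ! y) c = progress (ss ! x) c"
  shows "P (cl (ss ! y) c)"
  using assms(3-5)
proof (induction y rule: dec_induct)
  case (step y)
  have "progress (ss ! x) c \<le> progress (ss ! y) c" "progress (ss ! y) c \<le> progress (ss ! Suc y) c"
    using step.hyps step.prems(1) progress_mono_at by auto
  then show ?case using step closed[OF step_at] by simp
qed (use assms(2) in simp)

lemma GD_stable_at:
  assumes "cl (ss ! x) c = GD R Ls" "x \<le> y" "y \<le> N" "progress (ss ! y) c = progress (ss ! x) c"
  shows "\<exists>R' Ls'. cl (ss ! y) c = GD R' Ls'"
proof (rule progress_stable_at[where P = "\<lambda>st. \<exists>R Ls. st = GD R Ls"])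
  fix s a s'
  assume "step n k \<delta> B enc dec s a s'" "progress s' c = progress s c" "\<exists>R Ls. cl s c = GD R Ls"
  then show "\<exists>R Ls. cl s' c = GD R Ls" using progress_stable_step(1) by blast
qed (use assms in auto)

lemma PDw_stable_at:
  assumes "cl (ss ! x) c = PDw t A" "x \<le> y" "y \<le> N" "progress (ss ! y) c = progress (ss ! x) c"
  shows "\<exists>A'. cl (ss ! y) c = PDw t A'"
proof (rule progress_stable_at[where P = "\<lambda>st. \<exists>A. st = PDw t A"])
  fix s a s'
  assume "step n k \<delta> B enc dec s a s'" "progress s' c = progress s c" "\<exists>A. cl s c = PDw t A"
  then show "\<exists>A. cl s' c = PDw t A" using progress_stable_step(2) by blast
qed (use assms in auto)

lemma PDr_stable_at:
  assumes "cl (ss ! x) c = PDr t v A" "x \<le> y" "y \<le> N" "progress (ss ! y) c = progress (ss ! x) c"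
  shows "\<exists>v' A'. cl (ss ! y) c = PDr t v' A'"
proof (rule progress_stable_at[where P = "\<lambda>st. \<exists>v A. st = PDr t v A"])
  fix s a s'
  assume "step n k \<delta> B enc dec s a s'" "progress s' c = progress s c" "\<exists>v A. cl s c = PDr t v A"
  then show "\<exists>v A. cl s' c = PDr t v A" using progress_stable_step(3) by metis
qed (use assms in auto)
lemma WResp_at:
  assumes "x < N" and "as ! x = WResp c m"
  shows "\<exists>t A. cl (ss ! x) c = PDw t A \<and> cnt (ss ! x) c = m \<and> quorum_covered n k \<delta> B t (ss ! x)"
  using WResp_step[OF step_at[OF assms(1), unfolded assms(2)]] quorum_covered_ack[OF invariant_at]
    assms(1) by fastforce

lemma RResp_at:
  assumes "x < N" and "as ! x = RResp c m t v"
  shows "\<exists>A. cl (ss ! x) c = PDr t v A \<and> cnt (ss ! x) c = m \<and> quorum_covered n k \<delta> B t (ss ! x)"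
proof -
  obtain A i where "cl (ss ! x) c = PDr t v A" "cnt (ss ! x) c = m"
    "(Node i, Cli c, Ack (c, m)) \<in> net (ss ! x)" "i < n" "card (insert i A) = quorum_size n k"
    using RResp_step[OF step_at[OF assms(1), unfolded assms(2)]] by blast
  with quorum_covered_ack[OF invariant_at, of x c t A v i] assms(1) show ?thesis by auto
qed

lemma resp_at_progress: "resp_at as (c, m) y \<Longrightarrow> y < N \<Longrightarrow> progress (ss ! y) c = 5 * m + 2"
  unfolding resp_at_def using WResp_at RResp_at by (fastforce simp: progress_def)

lemma inv_at_cnt: "inv_at as (c, m) y \<Longrightarrow> y < N \<Longrightarrow> cnt (ss ! y) c < m \<and> cnt (ss ! Suc y) c = m"
  unfolding inv_at_def using WInv_step RInv_step step_at by fastforce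

lemma inv_at_unique:
  assumes "inv_at as w y" "inv_at as w y'" "y < N" "y' < N"
  shows "y = y'"
proof (rule ccontr)
  obtain c m where w: "w = (c, m)" by fastforce
  assume "y \<noteq> y'"
  then consider "Suc y \<le> y'" | "Suc y' \<le> y" by linarith
  then show False
    using inv_at_cnt[OF assms(1)[unfolded w]] inv_at_cnt[OF assms(2)[unfolded w]] assms(3,4)
      cnt_mono_at[of "Suc y" y' c] cnt_mono_at[of "Suc y'" y c] by cases auto
qed

text \<open>The write operation (c, cnt (ss ! p) c) creates the tag t at step p.\<close>

definition issues :: "nat \<Rightarrow> 'w \<Rightarrow> 'w tag \<Rightarrow> bool" where
  "issues p c t \<longleftrightarrow> p < N \<and> (\<exists>v R T. cl (ss ! p) c = GT v R T) \<and> cl (ss ! Suc p) c = PDw t {}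
     \<and> t \<in> fst ` sig (ss ! Suc p)"

lemma tag_issued:
  assumes "t \<in> fst ` sig (ss ! x)" and "t \<noteq> t0" and "x \<le> N" and "1 \<le> k"
  shows "\<exists>p<x. \<exists>c. issues p c t"
proof -
  have "t \<notin> fst ` sig (ss ! 0)" using assms(2) by (auto simp: ss_0 init_state_def)
  with ex_least_nat_less[of "\<lambda>y. t \<in> fst ` sig (ss ! y)", OF assms(1)]
  obtain p where p: "p < x" "t \<notin> fst ` sig (ss ! p)" "t \<in> fst ` sig (ss ! Suc p)" by blast
  with assms(3) have pN: "p < N" by simp
  obtain c v R T where "cl (ss ! p) c = GT v R T" "cl (ss ! Suc p) c = PDw t {}"
    using new_tag_step[OF invariant_at step_at[OF pN] assms(4) p(2,3)] pN by auto
  with pN p(3) have "issues p c t" unfolding issues_def by blast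
  with p(1) show ?thesis by blast
qed

lemma issues_progress:
  assumes "issues p c t"
  shows "progress (ss ! p) c = 5 * cnt (ss ! p) c + 1"
    and "progress (ss ! Suc p) c = 5 * cnt (ss ! p) c + 2"
  using assms GT_PDw_step[OF step_at] by (auto simp: issues_def progress_def)

lemma issues_unique:
  assumes "issues p c t" and "issues p' c t'" and "cnt (ss ! p) c = cnt (ss ! p') c"
  shows "t = t'"
proof -
  have "\<not> Suc p \<le> p'" and "\<not> Suc p' \<le> p"
    using issues_progress[OF assms(1)] issues_progress[OF assms(2)] assms
      progress_mono_at[of "Suc p" p' c] progress_mono_at[of "Suc p'" p c]
    by (auto simp: issues_def)
  moreover have "cl (ss ! Suc p) c = PDw t {}" "cl (ss ! Suc p') c = PDw t' {}"
    using assms by (simp_all add: issues_def)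
  moreover have "p = p'" using \<open>\<not> Suc p \<le> p'\<close> \<open>\<not> Suc p' \<le> p\<close> by linarith
  ultimately show ?thesis by simp
qed

lemma GT_invoked: "x \<le> N \<Longrightarrow> cl (ss ! x) c = GT v R T \<Longrightarrow> \<exists>y<x. as ! y = WInv c (cnt (ss ! x) c) v"
proof (induction x arbitrary: R T)
  case 0
  then show ?case by (simp add: ss_0 init_state_def)
next
  case (Suc x)
  then have x: "x < N" by simp
  from GT_step[OF step_at[OF x] Suc.prems(2)] show ?case
  proof
    assume "as ! x = WInv c (cnt (ss ! Suc x) c) v"
    then show ?case by blast
  next
    assume "\<exists>R0 T0. cl (ss ! x) c = GT v R0 T0 \<and> cnt (ss ! Suc x) c = cnt (ss ! x) c"
    then obtain R0 T0
      where "cl (ss ! x) c = GT v R0 T0" and cnt: "cnt (ss ! Suc x) c = cnt (ss ! x) c"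
      by blast
    then obtain y where "y < x" "as ! y = WInv c (cnt (ss ! x) c) v" using Suc.IH x by force
    with cnt show ?case by (intro exI[of _ y]) simp
  qed
qed

lemma issues_write_op:
  assumes "issues p c t"
  shows "write_op as (c, cnt (ss ! p) c)"
proof -
  obtain v R T where p: "p < N" "cl (ss ! p) c = GT v R T" using assms by (auto simp: issues_def)
  then obtain y where "y < p" "as ! y = WInv c (cnt (ss ! p) c) v"
    using GT_invoked[of p c v R T] by auto
  with p show ?thesis unfolding write_op_def by (intro exI[of _ y]) auto
qed

lemma issues_invoked_before:
  assumes "issues p c t" and "inv_at as (c, cnt (ss ! p) c) y" and "y < N"
  shows "y < p"
  using inv_at_cnt[OF assms(2,3)] cnt_mono_at[of p y c] assms(1,3) by (fastforce simp: issues_def)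

lemma issues_response:
  assumes iss: "issues p c t" and resp: "resp_at as (c, cnt (ss ! p) c) y" and y: "y < N"
  shows "p < y \<and> quorum_covered n k \<delta> B t (ss ! y)"
proof -
  have prog: "progress (ss ! y) c = progress (ss ! Suc p) c"
    using resp_at_progress[OF resp y] issues_progress[OF iss] by simp
  then have "Suc p \<le> y" using issues_progress[OF iss] progress_mono_at[of y p c] iss
    by (fastforce simp: issues_def)
  then have "\<exists>A. cl (ss ! y) c = PDw t A"
    using PDw_stable_at[of "Suc p" c t "{}" y] iss y prog by (simp add: issues_def)
  then have "as ! y = WResp c (cnt (ss ! p) c)"
    using resp y RResp_at unfolding resp_at_def by fastforce
  then have "quorum_covered n k \<delta> B t (ss ! y)"
    using WResp_at[OF y] \<open>\<exists>A. cl (ss ! y) c = PDw t A\<close> by fastforce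
  with \<open>Suc p \<le> y\<close> show ?thesis by simp
qed

definition recent_list :: "nat \<Rightarrow> nat \<Rightarrow> 'w \<Rightarrow> nat \<Rightarrow> ('w,'e) item set \<Rightarrow> bool" where
  "recent_list x a c m L \<longleftrightarrow> (\<exists>\<tau><x. L = lst (ss ! \<tau>) a \<and> m \<le> cnt (ss ! \<tau>) c)"

lemma replies_recent:
  "x \<le> N \<Longrightarrow>
   (\<forall>a c m L. (Node a, Cli c, RData (c, m) L) \<in> net (ss ! x) \<longrightarrow> a < n \<longrightarrow> a \<notin> B \<longrightarrow>
      recent_list x a c m L) \<and>
   (\<forall>c R Ls a. cl (ss ! x) c = GD R Ls \<longrightarrow> a \<in> R \<longrightarrow> a \<notin> B \<longrightarrow> recent_list x a c (cnt (ss ! x) c) (Ls a))"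
proof (induction x)
  case 0
  then show ?case by (simp add: ss_0 init_state_def)
next
  case (Suc x)
  then have x: "x < N" and IH: "(Node a, Cli c, RData (c, m) L) \<in> net (ss ! x) \<Longrightarrow> a < n \<Longrightarrow> a \<notin> B
      \<Longrightarrow> recent_list x a c m L"
    "cl (ss ! x) c = GD R Ls \<Longrightarrow> a \<in> R \<Longrightarrow> a \<notin> B \<Longrightarrow> recent_list x a c (cnt (ss ! x) c) (Ls a)"
    for a c m L R Ls by auto
  note I = invariant_at[of x] and st = step_at[OF x]
  have older: "recent_list x a c m L \<Longrightarrow> recent_list (Suc x) a c m L" for a c m L
    unfolding recent_list_def using less_SucI by blast
  have "recent_list (Suc x) a c m L"
    if "(Node a, Cli c, RData (c, m) L) \<in> net (ss ! Suc x)" "a < n" "a \<notin> B" for a c m L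
    using RData_step[OF I st that(1,3)] IH(1) older that x by (auto simp: recent_list_def)
  moreover have "recent_list (Suc x) a c (cnt (ss ! Suc x) c) (Ls a)"
    if gd: "cl (ss ! Suc x) c = GD R Ls" "a \<in> R" "a \<notin> B" for c R Ls a
  proof -
    have "phase_ok n \<delta> B enc (ss ! Suc x) (cl (ss ! Suc x) c)"
      using invariant_at[of "Suc x"] x by (simp add: invariant_def phases_wf_def)
    then have "a < n" using gd by auto
    from GD_step[OF st gd(1,2)] show ?thesis
    proof (elim disjE exE conjE)
      fix L assume msg: "(Node a, Cli c, RData (c, cnt (ss ! x) c) L) \<in> net (ss ! x)"
        and Ls: "Ls a = L \<inter> sig (ss ! x)" and cnt: "cnt (ss ! Suc x) c = cnt (ss ! x) c"
      obtain \<tau> where \<tau>: "\<tau> < x" "L = lst (ss ! \<tau>) a" "cnt (ss ! x) c \<le> cnt (ss ! \<tau>) c"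
        using IH(1)[OF msg \<open>a < n\<close> gd(3)] by (auto simp: recent_list_def)
      have "L \<subseteq> sig (ss ! x)"
        using \<tau> lists_wf_at[of \<tau>] sig_mono_at[of \<tau> x] \<open>a < n\<close> x by (auto simp: lists_wf_def)
      then show ?thesis using \<tau> Ls cnt by (auto simp: recent_list_def intro: less_SucI)
    qed (use IH(2) older gd(3) in auto)
  qed
  ultimately show ?case by blast
qed

lemma recent_list_sig:
  assumes "recent_list x a c m L" and "a < n" and "x \<le> N"
  shows "L \<subseteq> sig (ss ! x)"
proof -
  obtain \<tau> where "\<tau> < x" "L = lst (ss ! \<tau>) a" using assms(1) by (auto simp: recent_list_def)
  with assms(2,3) show ?thesis
    using lists_wf_at[of \<tau>] sig_mono_at[of \<tau> x] by (auto simp: lists_wf_def)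
qed

lemma initial_tag_covered:
  assumes "k \<le> n" and "0 < n" and "x \<le> N"
  shows "t0 \<in> fst ` sig (ss ! x) \<and> quorum_covered n k \<delta> B t0 (ss ! x)"
proof -
  have "(t0, enc v0 0) \<in> sig (ss ! 0)" using assms(2) by (auto simp: ss_0 init_state_def)
  then have "t0 \<in> fst ` sig (ss ! x)" using sig_mono_at[of 0 x] assms(3) by force
  moreover have "covered_by n \<delta> B {..<n} t0 (ss ! 0)"
    by (simp add: covered_by_def covers_def ss_0 init_state_def)
  then have "quorum_covered n k \<delta> B t0 (ss ! 0)"
    unfolding quorum_covered_def using quorum_size_le[OF assms(1)]
    by (intro exI[of _ "{..<n}"]) simp
  then have "quorum_covered n k \<delta> B t0 (ss ! x)" using quorum_covered_mono_at assms(3) by blast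
  ultimately show ?thesis by blast
qed

lemma RResp_tag_signed:
  assumes "x < N" and "as ! x = RResp c m t v" and "0 < n"
  shows "t \<in> fst ` sig (ss ! x)"
proof -
  obtain A where "cl (ss ! x) c = PDr t v A" using RResp_at[OF assms(1,2)] by blast
  moreover have "phase_ok n \<delta> B enc (ss ! x) (cl (ss ! x) c)"
    using invariant_at[of x] assms(1) by (simp add: invariant_def phases_wf_def)
  ultimately have "(t, enc v 0) \<in> sig (ss ! x)" using assms(3) by simp
  then show ?thesis by force
qed

lemma finite_candidates:
  assumes "d \<le> N" and "cl (ss ! d) c = GD R Ls" and "1 \<le> k"
  shows "finite (candidates k R' (Ls(i := L \<inter> sig (ss ! d))))"
proof -
  have "phase_ok n \<delta> B enc (ss ! d) (cl (ss ! d) c)"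
    using invariant_at[OF assms(1)] by (simp add: invariant_def phases_wf_def)
  then have "(Ls(i := L \<inter> sig (ss ! d))) a \<subseteq> sig (ss ! d)" for a using assms(2) by auto
  then have "candidates k R' (Ls(i := L \<inter> sig (ss ! d))) \<subseteq> fst ` sig (ss ! d)"
    by (rule candidates_subset[OF assms(3)])
  moreover have "finite (sig (ss ! d))" using lists_wf_at[OF assms(1)] by (simp add: lists_wf_def)
  ultimately show ?thesis using finite_subset by blast
qed

section \<open>A read following a completed read\<close>

context
  fixes j c2 m2
  assumes read_inv: "j < N" "as ! j = RInv c2 m2"
begin

lemma read_inv_state:
  "cnt (ss ! j) c2 < m2" "cnt (ss ! Suc j) c2 = m2" "cl (ss ! Suc j) c2 = GD {} (\<lambda>_. {})"
  using RInv_step[OF step_at[OF read_inv(1), unfolded read_inv(2)]] by auto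

lemma read_decision:
  assumes "j < l" "l < N" "as ! l = RResp c2 m2 t2 v2"
  obtains d R Ls i L where "j < d" "d < l" "cl (ss ! d) c2 = GD R Ls" "cnt (ss ! d) c2 = m2"
    "(Node i, Cli c2, RData (c2, m2) L) \<in> net (ss ! d)" "i < n" "i \<notin> R"
    "card (insert i R) = quorum_size n k"
    "t2 = Max (candidates k (insert i R) (Ls(i := L \<inter> sig (ss ! d))))"
proof -
  have prog_j: "progress (ss ! Suc j) c2 = 5 * m2 + 1"
    using read_inv_state by (simp add: progress_def)
  obtain Al where l: "cl (ss ! l) c2 = PDr t2 v2 Al" "cnt (ss ! l) c2 = m2"
    using RResp_at[OF assms(2,3)] by blast
  then have prog_l: "progress (ss ! l) c2 = 5 * m2 + 2" by (simp add: progress_def)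
  have "\<not> 5 * m2 + 2 \<le> progress (ss ! 0) c2"
    using read_inv_state(1) by (simp add: ss_0 init_state_def progress_def)
  with ex_least_nat_less[of "\<lambda>y. 5 * m2 + 2 \<le> progress (ss ! y) c2" l] prog_l
  obtain d where
    d: "d < l" "\<not> 5 * m2 + 2 \<le> progress (ss ! d) c2" "5 * m2 + 2 \<le> progress (ss ! Suc d) c2"
    by auto
  have "j < d"
  proof (rule ccontr)
    assume "\<not> j < d"
    then have "progress (ss ! Suc d) c2 \<le> progress (ss ! Suc j) c2"
      using progress_mono_at read_inv(1) by simp
    then show False using d(3) prog_j by simp
  qed
  have prog_d: "progress (ss ! d) c2 = 5 * m2 + 1"
    using d(2) prog_j progress_mono_at[of "Suc j" d c2] \<open>j < d\<close> d(1) assms(2) by simp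
  have prog_d': "progress (ss ! Suc d) c2 = 5 * m2 + 2"
    using d(1,3) prog_l progress_mono_at[of "Suc d" l c2] assms(2) by simp
  obtain R Ls where GD: "cl (ss ! d) c2 = GD R Ls"
    using GD_stable_at[OF read_inv_state(3), of d] prog_d prog_j \<open>j < d\<close> d(1) assms(2) by auto
  have cnt_d: "cnt (ss ! d) c2 = m2" and "phase (cl (ss ! Suc d) c2) = 2"
    using progress_decode[OF prog_d] progress_decode[OF prog_d'] by simp_all
  with GD_exit_step[OF step_at GD] d(1) assms(2) obtain i L v A where
    exit: "(Node i, Cli c2, RData (c2, m2) L) \<in> net (ss ! d)" "i < n" "i \<notin> R"
      "card (insert i R) = quorum_size n k"
      "cl (ss ! Suc d) c2 = PDr (Max (candidates k (insert i R) (Ls(i := L \<inter> sig (ss ! d))))) v A"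
    by fastforce
  have "\<exists>v A. cl (ss ! l) c2
      = PDr (Max (candidates k (insert i R) (Ls(i := L \<inter> sig (ss ! d))))) v A"
    using PDr_stable_at[OF exit(5), of l] prog_d' prog_l d(1) assms(2) by simp
  then have "t2 = Max (candidates k (insert i R) (Ls(i := L \<inter> sig (ss ! d))))"
    using l(1) by auto
  with that \<open>j < d\<close> d(1) GD cnt_d exit(1-4) show ?thesis by blast
qed

lemma responder_list_recent:
  assumes "d < N" and GD: "cl (ss ! d) c2 = GD R Ls" and "cnt (ss ! d) c2 = m2"
    and msg: "(Node i, Cli c2, RData (c2, m2) L) \<in> net (ss ! d)" and "i < n"
    and a: "a \<in> insert i R" "a \<notin> B"
  shows "\<exists>\<tau>. j < \<tau> \<and> \<tau> < d \<and> (Ls(i := L \<inter> sig (ss ! d))) a = lst (ss ! \<tau>) a"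
proof -
  have "recent_list d a c2 m2 ((Ls(i := L \<inter> sig (ss ! d))) a)"
  proof (cases "a = i")
    case True
    then have "recent_list d i c2 m2 L" using replies_recent[of d] assms by auto
    moreover from this have "L \<subseteq> sig (ss ! d)" using recent_list_sig assms(1,5) by simp
    ultimately show ?thesis using True by (simp add: Int_absorb2)
  next
    case False
    then show ?thesis using replies_recent[of d] assms by auto
  qed
  then obtain \<tau> where
    \<tau>: "\<tau> < d" "(Ls(i := L \<inter> sig (ss ! d))) a = lst (ss ! \<tau>) a" "m2 \<le> cnt (ss ! \<tau>) c2"
    by (auto simp: recent_list_def)
  have "j < \<tau>"
  proof (rule ccontr)
    assume "\<not> j < \<tau>"
    then have "cnt (ss ! \<tau>) c2 \<le> cnt (ss ! j) c2" using cnt_mono_at read_inv(1) by simp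
    then show False using \<tau>(3) read_inv_state(1) by simp
  qed
  with \<tau> show ?thesis by blast
qed

lemma issuer_concurrent:
  assumes iss: "issues p c t" and "p < d" and "d < N"
    and prog_d: "progress (ss ! d) c2 = 5 * m2 + 1"
    and fresh: "\<not> (t \<in> fst ` sig (ss ! j) \<and> quorum_covered n k \<delta> B t (ss ! j))"
  shows "write_op as (c, cnt (ss ! p) c) \<and> concurrent as (c, cnt (ss ! p) c) (c2, m2)"
proof -
  define w where "w = (c, cnt (ss ! p) c)"
  have "inv_at as (c2, m2) j" using read_inv by (simp add: inv_at_def)
  have "\<not> precedes as w (c2, m2)"
  proof
    assume "precedes as w (c2, m2)"
    then obtain y y' where y: "y < y'" "y' < N" "resp_at as w y" "inv_at as (c2, m2) y'"
      unfolding precedes_def by blast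
    then have "y' = j" using inv_at_unique \<open>inv_at as (c2, m2) j\<close> read_inv(1) by blast
    from issues_response[OF iss] y have "p < y" "quorum_covered n k \<delta> B t (ss ! y)"
      by (simp_all add: w_def)
    then have "quorum_covered n k \<delta> B t (ss ! j)" using quorum_covered_mono_at y \<open>y' = j\<close> by simp
    moreover have "t \<in> fst ` sig (ss ! j)"
      using iss sig_mono_at[of "Suc p" j] \<open>p < y\<close> y \<open>y' = j\<close> by (auto simp: issues_def)
    ultimately show False using fresh by blast
  qed
  moreover have "\<not> precedes as (c2, m2) w"
  proof
    assume "precedes as (c2, m2) w"
    then obtain y y' where y: "y < y'" "y' < N" "resp_at as (c2, m2) y" "inv_at as w y'"
      unfolding precedes_def by blast
    then have "y' < p" using issues_invoked_before[OF iss] by (simp add: w_def)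
    then have "y < d" using y(1) \<open>p < d\<close> by simp
    then have "progress (ss ! y) c2 \<le> progress (ss ! d) c2" using progress_mono_at \<open>d < N\<close> by simp
    then show False using resp_at_progress[OF y(3)] y prog_d by simp
  qed
  ultimately show ?thesis using issues_write_op[OF iss] by (simp add: w_def concurrent_def)
qed

lemma newer_tags_bounded:
  assumes k: "1 \<le> k" and bc: "bounded_concurrency \<delta> as"
    and d: "\<tau> \<le> d" "d < N" "progress (ss ! d) c2 = 5 * m2 + 1"
    and ts_max: "\<And>t. t \<in> fst ` sig (ss ! j) \<Longrightarrow> quorum_covered n k \<delta> B t (ss ! j) \<Longrightarrow> t \<le> ts"
    and "t0 \<le> ts" and T: "T \<subseteq> fst ` sig (ss ! \<tau>)" "\<forall>t \<in> T. ts < t"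
  shows "card T \<le> \<delta>"
proof -
  define W where "W = {w. write_op as w \<and> concurrent as w (c2, m2)}"
  have issued: "\<exists>w. \<exists>p<\<tau>. issues p (fst w) t \<and> snd w = cnt (ss ! p) (fst w)" if "t \<in> T" for t
  proof -
    have "t \<noteq> t0" using T(2) that \<open>t0 \<le> ts\<close> by fastforce
    moreover have "t \<in> fst ` sig (ss ! \<tau>)" "\<tau> \<le> N" using T(1) that d by auto
    ultimately obtain p c where "p < \<tau>" "issues p c t" using tag_issued k by blast
    then show ?thesis by (intro exI[of _ "(c, cnt (ss ! p) c)"]) auto
  qed
  define op where "op t = (SOME w. \<exists>p<\<tau>. issues p (fst w) t \<and> snd w = cnt (ss ! p) (fst w))" for t
  have op: "\<exists>p<\<tau>. issues p (fst (op t)) t \<and> snd (op t) = cnt (ss ! p) (fst (op t))" if "t \<in> T" for t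
    unfolding op_def using someI_ex[OF issued[OF that]] .
  have "op ` T \<subseteq> W"
  proof
    fix w assume "w \<in> op ` T"
    then obtain t where t: "t \<in> T" "w = op t" by blast
    then obtain p where p: "p < \<tau>" "issues p (fst w) t" "snd w = cnt (ss ! p) (fst w)"
      using op by blast
    have "\<not> (t \<in> fst ` sig (ss ! j) \<and> quorum_covered n k \<delta> B t (ss ! j))"
      using ts_max T(2) t(1) by fastforce
    then show "w \<in> W"
      using issuer_concurrent[OF p(2) _ d(2,3)] p d(1) unfolding W_def by (cases w) auto
  qed
  moreover have "inj_on op T"
  proof (rule inj_onI)
    fix t t' assume "t \<in> T" "t' \<in> T" "op t = op t'"
    with op obtain p p' where "issues p (fst (op t)) t" "issues p' (fst (op t)) t'"
      "cnt (ss ! p) (fst (op t)) = cnt (ss ! p') (fst (op t))" by metis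
    then show "t = t'" by (rule issues_unique)
  qed
  moreover have "finite W"
    using finite_write_ops[of as] unfolding W_def by (rule rev_finite_subset) auto
  ultimately have "card T \<le> card W" using card_inj_on_le by blast
  also have "card W \<le> \<delta>"
    using bc read_inv unfolding bounded_concurrency_def read_op_def W_def by auto
  finally show ?thesis .
qed

lemma max_covered_tag_retained:
  assumes k: "1 \<le> k" and bc: "bounded_concurrency \<delta> as"
    and d: "\<tau> \<le> d" "d < N" "progress (ss ! d) c2 = 5 * m2 + 1" and "a < n"
    and ts_max: "\<And>t. t \<in> fst ` sig (ss ! j) \<Longrightarrow> quorum_covered n k \<delta> B t (ss ! j) \<Longrightarrow> t \<le> ts"
    and "t0 \<le> ts" and cov: "covers \<delta> ts (lst (ss ! \<tau>) a)"
  shows "ts \<in> fst ` lst (ss ! \<tau>) a"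
proof (rule ccontr)
  assume missing: "ts \<notin> fst ` lst (ss ! \<tau>) a"
  define newer where "newer = {x \<in> lst (ss ! \<tau>) a. ts < fst x}"
  have L: "inj_on fst (lst (ss ! \<tau>) a)" "lst (ss ! \<tau>) a \<subseteq> sig (ss ! \<tau>)"
    using lists_wf_at[of \<tau>] d \<open>a < n\<close> by (auto simp: lists_wf_def)
  have "card (fst ` newer) = card newer"
    using L(1) by (intro card_image) (auto simp: newer_def elim: inj_on_subset)
  also have "\<delta> + 1 \<le> card newer" using cov missing by (simp add: covers_def newer_def)
  moreover have "fst ` newer \<subseteq> fst ` sig (ss ! \<tau>)" "\<forall>t \<in> fst ` newer. ts < t"
    using L(2) by (auto simp: newer_def)
  then have "card (fst ` newer) \<le> \<delta>"
    by (intro newer_tags_bounded[where \<tau> = \<tau> and d = d and ts = ts])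
      (use k bc d ts_max \<open>t0 \<le> ts\<close> in auto)
  ultimately show False by simp
qed

lemma max_covered_tag_candidate:
  assumes k: "1 \<le> k" and B: "B \<subseteq> {..<n}" "3 * real (card B) < real n - real k"
    and bc: "bounded_concurrency \<delta> as"
    and d: "d < N" "cl (ss ! d) c2 = GD R Ls" "cnt (ss ! d) c2 = m2"
    and msg: "(Node i, Cli c2, RData (c2, m2) L) \<in> net (ss ! d)" "i < n"
      "card (insert i R) = quorum_size n k"
    and ts: "quorum_covered n k \<delta> B ts (ss ! j)" "t0 \<le> ts"
      "\<And>t. t \<in> fst ` sig (ss ! j) \<Longrightarrow> quorum_covered n k \<delta> B t (ss ! j) \<Longrightarrow> t \<le> ts"
  shows "ts \<in> candidates k (insert i R) (Ls(i := L \<inter> sig (ss ! d)))"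
proof -
  define Ls' where "Ls' = Ls(i := L \<inter> sig (ss ! d))"
  obtain As where As: "quorum_size n k \<le> card As" "covered_by n \<delta> B As ts (ss ! j)"
    using ts(1) by (auto simp: quorum_covered_def)
  have "phase_ok n \<delta> B enc (ss ! d) (cl (ss ! d) c2)"
    using invariant_at[of d] d(1) by (simp add: invariant_def phases_wf_def)
  then have R: "insert i R \<subseteq> {..<n}" using d(2) msg(2) by simp
  have "insert i R \<inter> As - B \<subseteq> {a \<in> insert i R. \<exists>e. (ts, e) \<in> Ls' a}"
  proof
    fix a assume a: "a \<in> insert i R \<inter> As - B"
    then have a': "a \<in> insert i R" "a \<notin> B" "a \<in> As" "a < n" using R by auto
    obtain \<tau> where \<tau>: "j < \<tau>" "\<tau> < d" "Ls' a = lst (ss ! \<tau>) a"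
      using responder_list_recent[OF d msg(1,2) a'(1,2)] unfolding Ls'_def by blast
    have "covers \<delta> ts (lst (ss ! j) a)" using As(2) a'(2,3) by (simp add: covered_by_def)
    then have "covers \<delta> ts (lst (ss ! \<tau>) a)" using covers_mono_at \<tau>(1,2) d(1) by simp
    moreover have "progress (ss ! d) c2 = 5 * m2 + 1" using d(2,3) by (simp add: progress_def)
    ultimately have "ts \<in> fst ` lst (ss ! \<tau>) a"
      using max_covered_tag_retained[OF k bc less_imp_le[OF \<tau>(2)] d(1) _ a'(4) ts(3) ts(2)] by blast
    then show "a \<in> {a \<in> insert i R. \<exists>e. (ts, e) \<in> Ls' a}" using a \<tau>(3) by force
  qed
  moreover have "finite {a \<in> insert i R. \<exists>e. (ts, e) \<in> Ls' a}"
    using finite_subset[OF R] by simp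
  ultimately have "card (insert i R \<inter> As - B) \<le> card {a \<in> insert i R. \<exists>e. (ts, e) \<in> Ls' a}"
    by (simp add: card_mono)
  moreover have "k < card (insert i R \<inter> As - B)"
  proof (rule quorum_intersection[OF R])
    show "As \<subseteq> {..<n}" using As(2) by (simp add: covered_by_def)
    show "finite B" using B(1) finite_subset by blast
  qed (use As(1) msg(3) B(2) in simp_all)
  ultimately have "k \<le> card {a \<in> insert i R. \<exists>e. (ts, e) \<in> Ls' a}" by linarith
  then show ?thesis unfolding candidates_def Ls'_def[symmetric] by simp
qed

end

theorem read_tags_monotone:
  assumes k: "1 \<le> k" "k \<le> n" and B: "B \<subseteq> {..<n}" "3 * real (card B) < real n - real k"
    and bc: "bounded_concurrency \<delta> as" and "i < j" and "j < l" and "l < N"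
    and ri: "as ! i = RResp c1 m1 t1 v1" and rj: "as ! j = RInv c2 m2"
    and rl: "as ! l = RResp c2 m2 t2 v2"
  shows "t1 \<le> t2"
proof -
  have iN: "i < N" and jN: "j < N" and n: "0 < n" using assms by auto
  define G where "G = {t \<in> fst ` sig (ss ! j). quorum_covered n k \<delta> B t (ss ! j)}"
  have "finite G" using lists_wf_at[of j] jN by (simp add: G_def lists_wf_def)
  obtain A where "quorum_covered n k \<delta> B t1 (ss ! i)" using RResp_at[OF iN ri] by blast
  then have "quorum_covered n k \<delta> B t1 (ss ! j)" using quorum_covered_mono_at \<open>i < j\<close> jN by simp
  moreover have "t1 \<in> fst ` sig (ss ! j)"
    using RResp_tag_signed[OF iN ri n] sig_mono_at[of i j] \<open>i < j\<close> jN by auto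
  ultimately have "t1 \<in> G" by (simp add: G_def)
  have "t0 \<in> G" using initial_tag_covered[OF k(2) n] jN by (simp add: G_def)
  define ts where "ts = Max G"
  have "ts \<in> G" using Max_in[OF \<open>finite G\<close>] \<open>t0 \<in> G\<close> unfolding ts_def by blast
  have ts: "t1 \<le> ts" "t0 \<le> ts" "quorum_covered n k \<delta> B ts (ss ! j)"
    "\<And>t. t \<in> fst ` sig (ss ! j) \<Longrightarrow> quorum_covered n k \<delta> B t (ss ! j) \<Longrightarrow> t \<le> ts"
    using \<open>finite G\<close> \<open>t1 \<in> G\<close> \<open>t0 \<in> G\<close> \<open>ts \<in> G\<close> unfolding ts_def G_def by auto
  obtain d R Ls i' L where d: "j < d" "d < l" "cl (ss ! d) c2 = GD R Ls" "cnt (ss ! d) c2 = m2"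
    "(Node i', Cli c2, RData (c2, m2) L) \<in> net (ss ! d)" "i' < n" "i' \<notin> R"
    "card (insert i' R) = quorum_size n k"
    "t2 = Max (candidates k (insert i' R) (Ls(i' := L \<inter> sig (ss ! d))))"
    using read_decision[OF jN rj \<open>j < l\<close> \<open>l < N\<close> rl] by blast
  have dN: "d < N" using d(2) \<open>l < N\<close> by simp
  have "ts \<in> candidates k (insert i' R) (Ls(i' := L \<inter> sig (ss ! d)))"
    using max_covered_tag_candidate[OF jN rj k(1) B bc dN d(3,4,5,6,8) ts(3,2,4)] .
  then have "ts \<le> t2" unfolding d(9) using finite_candidates[OF _ d(3) k(1)] dN by simp
  with ts(1) show ?thesis by simp
qed

end

theorem mainTheorem8:
  fixes n k b \<delta> :: nat and B :: "nat set"
    and enc :: "'v \<Rightarrow> nat \<Rightarrow> 'e" and dec :: "'e set \<Rightarrow> 'v"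
    and t0 :: "('w::linorder) tag" and v0 :: 'v and as :: "('w,'v) act list"
  assumes "1 \<le> k" and "k \<le> n" and "mds_code n k enc dec"
    and "1 \<le> \<delta>"
    and "B \<subseteq> {..<n}" and "card B \<le> b" and "real b < (real n - real k) / 3"
    and "execution n k \<delta> B enc dec t0 v0 as"
    and "bounded_concurrency \<delta> as"
    and "i < j" and "j < l" and "l < length as"
    and "as ! i = RResp c1 m1 t1 v1"
    and "as ! j = RInv c2 m2"
    and "as ! l = RResp c2 m2 t2 v2"
  shows "t1 \<le> t2"
proof -
  obtain ss where run: "run n k \<delta> B enc dec t0 v0 as ss"
    using assms(8) unfolding execution_def run_def by blast
  have "3 * real b < real n - real k" using assms(7) by (simp add: field_simps)
  then have "3 * real (card B) < real n - real k" using assms(6) by linarith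
  from run.read_tags_monotone[OF run assms(1,2,5) this assms(9-15)] show ?thesis .
qed

end
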